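(* Let $G$ and $H$ be Left dead-ends with $G\geq H$. Then the formal birthday of $G$ is at most the formal birthday of $H$.
   Context: Games are finite partizan games; $o(G)$ is the misère outcome class (ordered $\mathscr{L}>\mathscr{N}>\mathscr{R}$, $\mathscr{L}>\mathscr{P}>\mathscr{R}$). A universe is a set of games closed under options, disjunctive sums, conjugates, and forming $\{\mathscr{G}^L\mid\mathscr{G}^R\}$ from nonempty finite subsets of it; $G\geq_\mathcal{U}H$ means $o(G+X)\geq o(H+X)$ for all $X\in\mathcal{U}$. A Left dead-end is a game all of whose subpositions have no Left option. For Left dead-ends, $G\geq H$ means $G\geq_\mathcal{U}H$ for every universe $\mathcal{U}$. The formal birthday is the height of the game tree. *)

theory Defs
  imports Main
begin

datatype game = Game "game list" "game list"

fun leftopts :: "game \<Rightarrow> game list" where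
  "leftopts (Game L R) = L"

fun rightopts :: "game \<Rightarrow> game list" where
  "rightopts (Game L R) = R"

definition options :: "game \<Rightarrow> game set" where
  "options G = set (leftopts G) \<union> set (rightopts G)"

inductive subpos :: "game \<Rightarrow> game \<Rightarrow> bool" where
  subpos_refl: "subpos G G"
| subpos_step: "X \<in> options G \<Longrightarrow> subpos Y X \<Longrightarrow> subpos Y G"

definition left_dead_end :: "game \<Rightarrow> bool" where
  "left_dead_end G \<longleftrightarrow> (\<forall>X. subpos X G \<longrightarrow> leftopts X = [])"

text \<open>Misere play: a player unable to move wins.
  lwins_first G: Left wins G moving first; rwins_first G: Right wins G moving first.\<close>
fun lwins_first :: "game \<Rightarrow> bool" and rwins_first :: "game \<Rightarrow> bool" where
  "lwins_first (Game L R) \<longleftrightarrow> L = [] \<or> (\<exists>X\<in>set L. \<not> rwins_first X)"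
| "rwins_first (Game L R) \<longleftrightarrow> R = [] \<or> (\<exists>X\<in>set R. \<not> lwins_first X)"

datatype outcome = OL | ON | OP | OR

definition misere_outcome :: "game \<Rightarrow> outcome" where
  "misere_outcome G =
     (if lwins_first G then (if rwins_first G then ON else OL)
      else (if rwins_first G then OR else OP))"

text \<open>Order on outcomes: L > N > R and L > P > R (N, P incomparable).\<close>
definition outcome_ge :: "outcome \<Rightarrow> outcome \<Rightarrow> bool" where
  "outcome_ge a b \<longleftrightarrow> a = b \<or> a = OL \<or> b = OR"

fun conjugate :: "game \<Rightarrow> game" where
  "conjugate (Game L R) = Game (map conjugate R) (map conjugate L)"

lemma size_mem_le: "x \<in> set xs \<Longrightarrow> size x \<le> size_list size xs"
  by (induction xs) auto

function gsum :: "game \<Rightarrow> game \<Rightarrow> game" where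
  "gsum (Game GL GR) (Game HL HR) =
     Game (map (\<lambda>X. gsum X (Game HL HR)) GL @ map (\<lambda>Y. gsum (Game GL GR) Y) HL)
          (map (\<lambda>X. gsum X (Game HL HR)) GR @ map (\<lambda>Y. gsum (Game GL GR) Y) HR)"
  by pat_completeness auto
termination
  by (relation "measure (\<lambda>(G, H). size G + size H)")
     (auto dest!: size_mem_le)

definition universe :: "game set \<Rightarrow> bool" where
  "universe U \<longleftrightarrow>
     (\<forall>G\<in>U. options G \<subseteq> U) \<and>
     (\<forall>G\<in>U. \<forall>H\<in>U. gsum G H \<in> U) \<and>
     (\<forall>G\<in>U. conjugate G \<in> U) \<and>
     (\<forall>L R. L \<noteq> [] \<longrightarrow> R \<noteq> [] \<longrightarrow> set L \<subseteq> U \<longrightarrow> set R \<subseteq> U \<longrightarrow> Game L R \<in> U)"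

definition ge_in :: "game set \<Rightarrow> game \<Rightarrow> game \<Rightarrow> bool" where
  "ge_in U G H \<longleftrightarrow> (\<forall>X\<in>U. outcome_ge (misere_outcome (gsum G X)) (misere_outcome (gsum H X)))"

definition ge_all :: "game \<Rightarrow> game \<Rightarrow> bool" where
  "ge_all G H \<longleftrightarrow> (\<forall>U. universe U \<longrightarrow> ge_in U G H)"

fun birthday :: "game \<Rightarrow> nat" where
  "birthday (Game L R) = Max (insert 0 ((\<lambda>X. Suc (birthday X)) ` set (L @ R)))"

end

theory Submission
  imports Defs
begin

(* Suppose b(G) > b(H) and play both games against X = ladder b(G) (b(H) + 1): that is,
   b(H) + 1 nested switches {. | 0} on top of the integer b(G).
   In G + X Right walks down a longest path of G while Left, who can only move in X, is
   forced down the rungs of the ladder; when the rungs are used up Left is left with an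
   integer at least as long as what remains of G, so Right wins moving first.
   In H + X Right runs out of moves in H before Left runs out of rungs and eventually has
   to take the escape to 0, after which Left has no move and hence wins.
   So o(G + X) is N or R while o(H + X) is L or P, contradicting o(G + X) \<ge> o(H + X). *)

fun integer_game :: "nat \<Rightarrow> game" where
  "integer_game 0 = Game [] []"
| "integer_game (Suc n) = Game [integer_game n] []"

fun ladder :: "nat \<Rightarrow> nat \<Rightarrow> game" where
  "ladder n 0 = integer_game n"
| "ladder n (Suc k) = Game [ladder n k] [Game [] []]"

lemma leftopts_gsum:
  "leftopts (gsum G H) = map (\<lambda>X. gsum X H) (leftopts G) @ map (gsum G) (leftopts H)"
  by (cases G; cases H) simp

lemma rightopts_gsum:
  "rightopts (gsum G H) = map (\<lambda>X. gsum X H) (rightopts G) @ map (gsum G) (rightopts H)"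
  by (cases G; cases H) simp

lemma lwins_first_iff:
  "lwins_first G \<longleftrightarrow> leftopts G = [] \<or> (\<exists>X\<in>set (leftopts G). \<not> rwins_first X)"
  by (cases G) simp

lemma rwins_first_iff:
  "rwins_first G \<longleftrightarrow> rightopts G = [] \<or> (\<exists>X\<in>set (rightopts G). \<not> lwins_first X)"
  by (cases G) simp

lemma left_dead_end_leftopts: "left_dead_end G \<Longrightarrow> leftopts G = []"
  unfolding left_dead_end_def by (blast intro: subpos_refl)

lemma left_dead_end_rightopt:
  assumes "left_dead_end G" and "X \<in> set (rightopts G)"
  shows "left_dead_end X"
proof -
  have "X \<in> options G"
    using assms(2) by (simp add: options_def)
  then show ?thesis
    using assms(1) subpos_step unfolding left_dead_end_def by blast
qed

lemma leftopts_gsum_left_dead_end: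
  "left_dead_end G \<Longrightarrow> leftopts (gsum G H) = map (gsum G) (leftopts H)"
  by (simp add: leftopts_gsum left_dead_end_leftopts)

lemma birthday_rightopt_less:
  assumes "X \<in> set (rightopts G)"
  shows "birthday X < birthday G"
proof (cases G)
  case (Game L R)
  then have "Suc (birthday X) \<le> Max (insert 0 ((\<lambda>X. Suc (birthday X)) ` set (L @ R)))"
    using assms by (intro Max_ge) auto
  then show ?thesis
    using Game by simp
qed

lemma birthday_attained_by_rightopt:
  assumes "leftopts G = []" and "0 < birthday G"
  obtains X where "X \<in> set (rightopts G)" and "birthday G = Suc (birthday X)"
proof (cases G)
  case (Game L R)
  let ?S = "insert 0 ((\<lambda>X. Suc (birthday X)) ` set (L @ R))"
  have "Max ?S \<in> ?S"
    by (intro Max_in) auto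
  moreover have "Max ?S \<noteq> 0"
    using assms Game by simp
  ultimately show ?thesis
    using assms Game that by auto
qed

lemma rwins_first_gsum_integer_game:
  assumes "left_dead_end G" and "birthday G \<le> n"
  shows "rwins_first (gsum G (integer_game n))"
  using assms
proof (induction n arbitrary: G)
  case 0
  then have "rightopts G = []"
    using birthday_rightopt_less by (metis list.set_intros(1) neq_Nil_conv not_less0 le_zero_eq)
  then show ?case
    by (simp add: rwins_first_iff rightopts_gsum)
next
  case (Suc n)
  show ?case
  proof (cases "rightopts G")
    case Nil
    then show ?thesis
      by (simp add: rwins_first_iff rightopts_gsum)
  next
    case (Cons X Xs)
    then have X: "X \<in> set (rightopts G)"
      by simp
    have dead: "left_dead_end X"
      using Suc.prems(1) X by (rule left_dead_end_rightopt)
    have "rwins_first (gsum X (integer_game n))"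
      using Suc.IH[OF dead] birthday_rightopt_less[OF X] Suc.prems(2) by simp
    then have "\<not> lwins_first (gsum X (integer_game (Suc n)))"
      by (simp add: lwins_first_iff leftopts_gsum_left_dead_end[OF dead])
    then show ?thesis
      using X by (auto simp: rwins_first_iff rightopts_gsum)
  qed
qed

lemma rwins_first_gsum_ladder:
  assumes "left_dead_end G" and "k \<le> birthday G" and "birthday G \<le> n + k"
  shows "rwins_first (gsum G (ladder n k))"
  using assms
proof (induction k arbitrary: G)
  case 0
  then show ?case
    by (simp add: rwins_first_gsum_integer_game)
next
  case (Suc k)
  have "0 < birthday G"
    using Suc.prems(2) by simp
  with left_dead_end_leftopts[OF Suc.prems(1)]
  obtain X where X: "X \<in> set (rightopts G)" and b: "birthday G = Suc (birthday X)"
    by (rule birthday_attained_by_rightopt)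
  have dead: "left_dead_end X"
    using Suc.prems(1) X by (rule left_dead_end_rightopt)
  have "rwins_first (gsum X (ladder n k))"
    using Suc.IH[OF dead] b Suc.prems(2,3) by simp
  then have "\<not> lwins_first (gsum X (ladder n (Suc k)))"
    by (simp add: lwins_first_iff leftopts_gsum_left_dead_end[OF dead])
  then show ?case
    using X by (auto simp: rwins_first_iff rightopts_gsum)
qed

lemma not_rwins_first_gsum_ladder:
  assumes "left_dead_end H" and "birthday H < k"
  shows "\<not> rwins_first (gsum H (ladder n k))"
  using assms
proof (induction k arbitrary: H)
  case 0
  then show ?case
    by simp
next
  case (Suc k)
  have escape: "lwins_first (gsum H (Game [] []))"
    by (simp add: lwins_first_iff leftopts_gsum_left_dead_end[OF Suc.prems(1)])
  have "lwins_first (gsum X (ladder n (Suc k)))" if X: "X \<in> set (rightopts H)" for X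
  proof -
    have dead: "left_dead_end X"
      using Suc.prems(1) X by (rule left_dead_end_rightopt)
    have "\<not> rwins_first (gsum X (ladder n k))"
      using Suc.IH[OF dead] birthday_rightopt_less[OF X] Suc.prems(2) by simp
    then show ?thesis
      by (simp add: lwins_first_iff leftopts_gsum_left_dead_end[OF dead])
  qed
  with escape show ?case
    by (auto simp: rwins_first_iff rightopts_gsum)
qed

theorem mainTheorem12:
  assumes "left_dead_end G" and "left_dead_end H" and "ge_all G H"
  shows "birthday G \<le> birthday H"
proof (rule ccontr)
  assume "\<not> birthday G \<le> birthday H"
  have "universe UNIV"
    by (simp add: universe_def)
  then have ge: "\<And>X. outcome_ge (misere_outcome (gsum G X)) (misere_outcome (gsum H X))"
    using assms(3) unfolding ge_all_def ge_in_def by blast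
  define X where "X = ladder (birthday G) (Suc (birthday H))"
  have "rwins_first (gsum G X)"
    unfolding X_def using \<open>\<not> birthday G \<le> birthday H\<close>
    by (intro rwins_first_gsum_ladder assms(1)) auto
  moreover have "\<not> rwins_first (gsum H X)"
    unfolding X_def by (intro not_rwins_first_gsum_ladder assms(2)) simp
  ultimately show False
    using ge[of X] by (auto simp: outcome_ge_def misere_outcome_def split: if_splits)
qed

end
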